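(* Let $k\in\mathbb{N}$ and let $G=(g_1,\dots,g_k)\in\mathbb{N}_0^k$ be a telescopic sequence. Then there exists a sequence $G'$ which is both telescopic and minimal and satisfies $\langle G'\rangle=\langle G\rangle$.
   Context: $\mathbb{N}$ denotes the positive integers and $\mathbb{N}_0=\mathbb{N}\cup\{0\}$. For a finite sequence $G=(g_1,\dots,g_k)\in\mathbb{N}_0^k$ (repeats and zeros allowed), $\langle G\rangle$ denotes the set of all $\mathbb{N}_0$-linear combinations of $g_1,\dots,g_k$. $G$ is minimal if $\langle G''\rangle\ne\langle G\rangle$ for every proper subsequence $G''$ of $G$. For $1\le i\le k$ let $G_i=(g_1,\dots,g_i)$ and $d_i=\gcd(G_i)$. A sequence is called admissible if $g_1>0$ when $k=1$ and $g_1+g_2>0$ when $k\ge 2$ (so all $d_i>0$). For admissible $G$, define $c(G)=(c_2,\dots,c_k)$ with $c_j=d_{j-1}/d_j$. An admissible $G$ is telescopic if $c_jg_j\in\langle G_{j-1}\rangle$ for all $2\le j\le k$ (no requirement that $\gcd(G)=1$ or that $G$ be increasing). *)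

theory Defs
  imports Main "HOL-Library.Sublist"
begin

text \<open>Sequences G = (g_1,...,g_k) in N_0^k are lists of naturals; g_i = G ! (i-1).\<close>

definition gens :: "nat list \<Rightarrow> nat set" where
  "gens G = {x. \<exists>cs :: nat list. length cs = length G \<and>
                 x = sum_list (map2 (*) cs G)}"

definition minimal :: "nat list \<Rightarrow> bool" where
  "minimal G \<longleftrightarrow> (\<forall>H. strict_subseq H G \<longrightarrow> gens H \<noteq> gens G)"

definition dseq :: "nat list \<Rightarrow> nat \<Rightarrow> nat" where
  "dseq G i = Gcd (set (take i G))"

definition admissible :: "nat list \<Rightarrow> bool" where
  "admissible G \<longleftrightarrow> G \<noteq> [] \<and>
     (length G = 1 \<longrightarrow> G ! 0 > 0) \<and>
     (length G \<ge> 2 \<longrightarrow> G ! 0 + G ! 1 > 0)"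

definition cseq :: "nat list \<Rightarrow> nat \<Rightarrow> nat" where
  "cseq G j = dseq G (j - 1) div dseq G j"

definition telescopic :: "nat list \<Rightarrow> bool" where
  "telescopic G \<longleftrightarrow> admissible G \<and>
     (\<forall>j. 2 \<le> j \<and> j \<le> length G \<longrightarrow>
          cseq G j * G ! (j - 1) \<in> gens (take (j - 1) G))"

end

theory Submission
  imports Defs "HOL-Computational_Algebra.Euclidean_Algorithm"
begin

text \<open>
  Since c_j g_j = lcm(d_(j-1), g_j), telescopicity says that lcm(gcd(g_1..g_m), g_(m+1)) lies in
  the monoid generated by g_1..g_m, a condition that depends only on that monoid. So we induct
  along the sequence: let H be telescopic and minimal with the same monoid as a prefix,
  D = gcd H, and g the next generator, with L = lcm(D, g) in the monoid of H. If D divides g,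
  then g = L is redundant. Otherwise g is not in the monoid of H, and the only element of H
  that can become redundant after adjoining g is L itself: if h = t g + s with s in the monoid
  of the other elements, then L divides t g, and writing L in terms of H forces h = L. Hence
  g is appended if L does not occur in H, and replaces L otherwise; the replacement stays
  telescopic because L is a multiple of g and D divides every later generator.
\<close>

inductive_set monoid_gen :: "nat set \<Rightarrow> nat set" for A where
  zero: "0 \<in> monoid_gen A"
| add_gen: "a \<in> monoid_gen A \<Longrightarrow> x \<in> A \<Longrightarrow> a + x \<in> monoid_gen A"

lemma monoid_gen_add:
  assumes "a \<in> monoid_gen A" and "b \<in> monoid_gen A"
  shows "a + b \<in> monoid_gen A"
  using assms(2)
  by induction (auto simp flip: add.assoc intro: assms(1) monoid_gen.add_gen)

lemma monoid_gen_mult: "a \<in> monoid_gen A \<Longrightarrow> t * a \<in> monoid_gen A"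
  by (induction t) (auto intro: monoid_gen.zero monoid_gen_add)

lemma monoid_gen_base: "x \<in> A \<Longrightarrow> x \<in> monoid_gen A"
  using monoid_gen.add_gen[OF monoid_gen.zero] by simp

lemma monoid_gen_multiple: "g \<in> A \<Longrightarrow> g dvd x \<Longrightarrow> x \<in> monoid_gen A"
  by (elim dvdE) (simp add: mult.commute monoid_gen_mult monoid_gen_base)

lemma monoid_gen_subset:
  assumes "A \<subseteq> monoid_gen B"
  shows "monoid_gen A \<subseteq> monoid_gen B"
proof
  fix a assume "a \<in> monoid_gen A"
  then show "a \<in> monoid_gen B"
    by induction (use assms in \<open>auto intro: monoid_gen.zero monoid_gen_add\<close>)
qed

lemma monoid_gen_mono: "A \<subseteq> B \<Longrightarrow> monoid_gen A \<subseteq> monoid_gen B"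
  by (meson monoid_gen_base monoid_gen_subset subset_iff)

lemma monoid_gen_dvd:
  assumes "\<And>x. x \<in> A \<Longrightarrow> d dvd x" and "a \<in> monoid_gen A"
  shows "d dvd a"
  using assms(2) by induction (auto intro: dvd_add assms(1))

lemma monoid_gen_empty: "monoid_gen {} = {0}"
  using monoid_gen.cases by (auto intro: monoid_gen.zero)

lemma monoid_gen_insert: "monoid_gen (insert x A) = {t * x + s | t s. s \<in> monoid_gen A}"
proof
  show "monoid_gen (insert x A) \<subseteq> {t * x + s | t s. s \<in> monoid_gen A}"
  proof
    fix a assume "a \<in> monoid_gen (insert x A)"
    then show "a \<in> {t * x + s | t s. s \<in> monoid_gen A}"
    proof (induction a rule: monoid_gen.induct)
      case zero
      show ?case using monoid_gen.zero by force
    next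
      case (add_gen a y)
      then obtain t s where a: "a = t * x + s" "s \<in> monoid_gen A" by blast
      show ?case
      proof (cases "y = x")
        case True
        with a have "a + y = Suc t * x + s" by simp
        with a show ?thesis by blast
      next
        case False
        with add_gen a have "s + y \<in> monoid_gen A" by (auto intro: monoid_gen.add_gen)
        moreover from a have "a + y = t * x + (s + y)" by simp
        ultimately show ?thesis by blast
      qed
    qed
  qed
  show "{t * x + s | t s. s \<in> monoid_gen A} \<subseteq> monoid_gen (insert x A)"
  proof safe
    fix t s assume "s \<in> monoid_gen A"
    then have "s \<in> monoid_gen (insert x A)"
      using monoid_gen_mono[of A "insert x A"] by blast
    then show "t * x + s \<in> monoid_gen (insert x A)"
      by (intro monoid_gen_add monoid_gen_mult monoid_gen_base[of x]) simp_all
  qed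
qed

lemma monoid_gen_insert_absorb:
  assumes "x \<in> monoid_gen A"
  shows "monoid_gen (insert x A) = monoid_gen A"
proof
  show "monoid_gen (insert x A) \<subseteq> monoid_gen A"
    using assms monoid_gen_base by (intro monoid_gen_subset) blast
  show "monoid_gen A \<subseteq> monoid_gen (insert x A)"
    by (rule monoid_gen_mono) blast
qed

lemma Gcd_monoid_gen: "Gcd (monoid_gen A) = Gcd A"
proof (rule dvd_antisym)
  show "Gcd (monoid_gen A) dvd Gcd A"
    by (meson Gcd_dvd Gcd_greatest monoid_gen_base)
  show "Gcd A dvd Gcd (monoid_gen A)"
    by (meson Gcd_dvd Gcd_greatest monoid_gen_dvd)
qed

lemma gens_eq_monoid_gen: "gens G = monoid_gen (set G)"
proof (induction G)
  case Nil
  show ?case by (simp add: gens_def monoid_gen_empty)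
next
  case (Cons x G)
  have "gens (x # G) = {t * x + s | t s. s \<in> gens G}"
  proof safe
    fix a assume "a \<in> gens (x # G)"
    then obtain cs' where "length cs' = Suc (length G)" "a = sum_list (map2 (*) cs' (x # G))"
      by (auto simp: gens_def)
    moreover from this obtain t cs where "cs' = t # cs"
      by (cases cs') auto
    ultimately have "length cs = length G" "a = t * x + sum_list (map2 (*) cs G)"
      by simp_all
    then show "\<exists>t s. a = t * x + s \<and> s \<in> gens G"
      by (auto simp: gens_def)
  next
    fix t s assume "s \<in> gens G"
    then obtain cs where "length cs = length G" "s = sum_list (map2 (*) cs G)"
      by (auto simp: gens_def)
    then show "t * x + s \<in> gens (x # G)"
      unfolding gens_def by (intro CollectI exI[of _ "t # cs"]) simp
  qed
  also have "\<dots> = monoid_gen (set (x # G))"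
    by (simp only: Cons.IH list.set monoid_gen_insert)
  finally show ?case .
qed

lemma set_eq_insert_nths_compl:
  "j < length xs \<Longrightarrow> set xs = insert (xs ! j) (set (nths xs (- {j})))"
  by (auto simp: set_nths in_set_conv_nth)

lemma set_list_update_eq_insert_nths_compl:
  "i < length xs \<Longrightarrow> set (xs[i := x]) = insert x (set (nths xs (- {i})))"
  by (auto simp: set_nths in_set_conv_nth nth_list_update) (metis nth_list_update_neq)+

lemma set_nths_list_update_compl: "set (nths (xs[i := x]) (- {i})) = set (nths xs (- {i}))"
  by (auto simp: set_nths) (metis nth_list_update_neq)+

lemma set_nths_list_update_compl_subset:
  "set (nths (xs[i := x]) (- {j})) \<subseteq> insert x (set (nths xs (- {j})))"
  by (auto simp: set_nths) (metis nth_list_update_eq nth_list_update_neq)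

lemma set_nths_snoc_compl:
  "j < length xs \<Longrightarrow> set (nths (xs @ [x]) (- {j})) = insert x (set (nths xs (- {j})))"
  by (auto simp: nths_append)

lemma nths_snoc_compl_last: "nths (xs @ [x]) (- {length xs}) = xs"
  by (simp add: nths_append nths_all)

lemma strict_subseq_nths_compl: "j < length xs \<Longrightarrow> strict_subseq (nths xs (- {j})) xs"
proof -
  assume j: "j < length xs"
  have "{i. i < length xs \<and> i \<in> - {j}} = {..<length xs} - {j}" by auto
  then have "length (nths xs (- {j})) = length xs - 1"
    using j by (simp add: length_nths)
  then show ?thesis
    using j by (auto simp: strict_subseq_def subseq_conv_nths)
qed

lemma strict_subseq_subset_nths_compl:
  assumes "strict_subseq H G"
  obtains j where "j < length G" "set H \<subseteq> set (nths G (- {j}))"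
proof -
  obtain N where N: "H = nths G N"
    using assms by (auto simp: strict_subseq_def subseq_conv_nths)
  moreover have "H \<noteq> G" using assms by (simp add: strict_subseq_def)
  ultimately obtain j where "j < length G" "j \<notin> N"
    using nths_all by blast
  moreover from this have "set H \<subseteq> set (nths G (- {j}))"
    by (auto simp: N set_nths)
  ultimately show ?thesis using that by blast
qed

theorem minimal_iff_irredundant:
  "minimal G \<longleftrightarrow> (\<forall>j<length G. G ! j \<notin> monoid_gen (set (nths G (- {j}))))"
proof
  assume min: "minimal G"
  show "\<forall>j<length G. G ! j \<notin> monoid_gen (set (nths G (- {j})))"
  proof (intro allI impI notI)
    fix j assume j: "j < length G" and red: "G ! j \<in> monoid_gen (set (nths G (- {j})))"
    have "gens (nths G (- {j})) = gens G"
      using monoid_gen_insert_absorb[OF red] set_eq_insert_nths_compl[OF j]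
      by (simp add: gens_eq_monoid_gen)
    with min strict_subseq_nths_compl[OF j] show False
      unfolding minimal_def by blast
  qed
next
  assume irred: "\<forall>j<length G. G ! j \<notin> monoid_gen (set (nths G (- {j})))"
  show "minimal G" unfolding minimal_def
  proof (intro allI impI notI)
    fix H assume strict: "strict_subseq H G" and eq: "gens H = gens G"
    from strict obtain j where j: "j < length G" and sub: "set H \<subseteq> set (nths G (- {j}))"
      by (rule strict_subseq_subset_nths_compl)
    have "G ! j \<in> monoid_gen (set H)"
      using eq j by (simp add: gens_eq_monoid_gen monoid_gen_base)
    also have "\<dots> \<subseteq> monoid_gen (set (nths G (- {j})))"
      using sub by (rule monoid_gen_mono)
    finally show False using irred j by blast
  qed
qed

lemma minimal_imp_distinct:
  assumes "minimal G"
  shows "distinct G"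
  unfolding distinct_conv_nth
proof (intro allI impI notI)
  fix i j assume "i < length G" "j < length G" "i \<noteq> j" "G ! i = G ! j"
  then have "G ! j \<in> set (nths G (- {j}))"
    by (auto simp: set_nths) metis
  with assms \<open>j < length G\<close> show False
    by (auto simp: minimal_iff_irredundant dest: monoid_gen_base)
qed

lemma lcm_gcd_lcm_eq_if_dvd:
  fixes d g x k :: "'a :: factorial_semiring_gcd"
  assumes "d dvd k"
  shows "lcm (gcd (lcm d g) x) k = lcm (gcd g x) k"
proof -
  have "lcm (gcd (lcm d g) x) k = gcd (lcm k (lcm d g)) (lcm k x)"
    by (simp add: lcm.commute lcm_gcd_distrib)
  also have "lcm k (lcm d g) = lcm k g"
    using assms by (simp add: lcm.assoc [symmetric] lcm_proj1_if_dvd)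
  also have "gcd (lcm k g) (lcm k x) = lcm (gcd g x) k"
    by (simp add: lcm.commute lcm_gcd_distrib)
  finally show ?thesis .
qed

lemma lcm_dvd_mult_if_dvd_add:
  fixes d g s t :: nat
  assumes "d dvd t * g + s" and "d dvd s"
  shows "lcm d g dvd t * g"
  using assms by (simp add: dvd_add_left_iff)

lemma cseq_mult_nth:
  assumes "m < length G"
  shows "cseq G (Suc m) * G ! m = lcm (Gcd (set (take m G))) (G ! m)"
proof -
  have "dseq G (Suc m) = gcd (Gcd (set (take m G))) (G ! m)"
    using assms by (simp add: dseq_def take_Suc_conv_app_nth gcd.commute)
  then show ?thesis
    by (simp add: cseq_def dseq_def lcm_nat_def) (metis div_mult_swap gcd_dvd1 mult.commute)
qed

theorem telescopic_iff_lcm: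
  "telescopic G \<longleftrightarrow> admissible G \<and>
     (\<forall>m. 1 \<le> m \<and> m < length G \<longrightarrow>
        lcm (Gcd (set (take m G))) (G ! m) \<in> monoid_gen (set (take m G)))"
proof -
  have shift: "(\<forall>j. 2 \<le> j \<and> j \<le> n \<longrightarrow> P j) \<longleftrightarrow> (\<forall>m. 1 \<le> m \<and> m < n \<longrightarrow> P (Suc m))"
    for P :: "nat \<Rightarrow> bool" and n
    by (metis Suc_1 Suc_le_D Suc_le_eq Suc_le_mono)
  show ?thesis
    unfolding telescopic_def gens_eq_monoid_gen shift
    by (auto simp: cseq_mult_nth)
qed

lemma admissible_snoc_iff:
  "xs \<noteq> [] \<Longrightarrow> xs \<noteq> [0] \<Longrightarrow> admissible (xs @ [x]) \<longleftrightarrow> admissible xs"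
  by (cases xs rule: remdups_adj.cases) (auto simp: admissible_def nth_append)

lemma admissible_list_update: "admissible xs \<Longrightarrow> 0 < x \<Longrightarrow> admissible (xs[i := x])"
  by (cases xs rule: remdups_adj.cases) (auto simp: admissible_def split: nat.splits)

lemma telescopic_snoc_iff:
  assumes "xs \<noteq> []" and "xs \<noteq> [0]"
  shows "telescopic (xs @ [x]) \<longleftrightarrow>
    telescopic xs \<and> lcm (Gcd (set xs)) x \<in> monoid_gen (set xs)"
proof -
  have "1 \<le> length xs" using assms(1) by (cases xs) auto
  then show ?thesis
    unfolding telescopic_iff_lcm admissible_snoc_iff[OF assms]
    by (auto simp: less_Suc_eq nth_append)
qed

lemma telescopic_list_update:
  assumes tel: "telescopic H" and i: "i < length H"
    and Hi: "H ! i = lcm (Gcd (set H)) g" and g: "0 < g"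
  shows "telescopic (H[i := g])"
proof -
  define D where "D = Gcd (set H)"
  have D_dvd_Gcd_take: "D dvd Gcd (set (take m H))" for m
    unfolding D_def by (meson Gcd_dvd Gcd_greatest in_set_takeD)
  have "lcm (Gcd (set (take m (H[i := g])))) (H[i := g] ! m)
      \<in> monoid_gen (set (take m (H[i := g])))"
    if m: "1 \<le> m" "m < length H" for m
  proof -
    define P where "P = take m H"
    from tel m have lcm_P: "lcm (Gcd (set P)) (H ! m) \<in> monoid_gen (set P)"
      by (simp add: telescopic_iff_lcm P_def)
    consider "m < i" | "m = i" | "i < m" by linarith
    then show ?thesis
    proof cases
      case 1
      with lcm_P show ?thesis by (simp add: P_def)
    next
      case 2
      have "lcm (Gcd (set P)) (lcm D g) = lcm (Gcd (set P)) g"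
        using D_dvd_Gcd_take by (simp add: P_def lcm.assoc [symmetric] lcm_proj1_if_dvd)
      with lcm_P 2 i Hi show ?thesis by (simp add: P_def D_def)
    next
      case 3
      define R where "R = set (nths P (- {i}))"
      have iP: "i < length P" and "P ! i = lcm D g"
        using 3 m Hi by (simp_all add: P_def D_def)
      then have set_P: "set P = insert (lcm D g) R"
        using set_eq_insert_nths_compl[OF iP] by (simp add: R_def)
      have set_P': "set (take m (H[i := g])) = insert g R"
        using set_list_update_eq_insert_nths_compl[OF iP]
        by (simp add: P_def R_def take_update_swap)
      have "D dvd H ! m"
        using m by (simp add: D_def)
      then have "lcm (Gcd (set P)) (H ! m) = lcm (Gcd (insert g R)) (H ! m)"
        unfolding set_P Gcd_insert by (rule lcm_gcd_lcm_eq_if_dvd)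
      moreover have "monoid_gen (set P) \<subseteq> monoid_gen (insert g R)"
        unfolding set_P
        by (intro monoid_gen_subset) (auto intro: monoid_gen_base monoid_gen_multiple[of g])
      ultimately show ?thesis
        using lcm_P 3 set_P' by auto
    qed
  qed
  then show ?thesis
    using tel g by (simp add: telescopic_iff_lcm admissible_list_update)
qed

lemma minimal_redundant_after_insert_eq_lcm:
  assumes min: "minimal H" and lcm_in: "lcm (Gcd (set H)) g \<in> monoid_gen (set H)"
    and j: "j < length H" and red: "H ! j \<in> monoid_gen (insert g (set (nths H (- {j}))))"
  shows "H ! j = lcm (Gcd (set H)) g"
proof -
  define D L R where "D = Gcd (set H)" and "L = lcm D g" and "R = set (nths H (- {j}))"
  have irred: "H ! j \<notin> monoid_gen R"
    using min j by (simp add: minimal_iff_irredundant R_def)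
  have D_dvd: "D dvd x" if "x \<in> monoid_gen (set H)" for x
    using that unfolding D_def by (rule monoid_gen_dvd[rotated]) simp
  have R_sub: "monoid_gen R \<subseteq> monoid_gen (set H)"
    unfolding R_def by (intro monoid_gen_mono set_nths_subset)
  from red obtain t s where Hj: "H ! j = t * g + s" and s: "s \<in> monoid_gen R"
    by (auto simp: monoid_gen_insert R_def)
  have "D dvd t * g + s"
    using D_dvd j Hj by (metis monoid_gen_base nth_mem)
  moreover have "D dvd s"
    using D_dvd s R_sub by blast
  ultimately have "L dvd t * g"
    unfolding L_def by (rule lcm_dvd_mult_if_dvd_add)
  then obtain q where "t * g = L * q" ..
  with Hj have q: "H ! j = q * L + s" by simp
  from lcm_in obtain b s' where b: "L = b * H ! j + s'" and s': "s' \<in> monoid_gen R"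
    using set_eq_insert_nths_compl[OF j]
    by (auto simp: monoid_gen_insert L_def D_def R_def)
  have "q \<noteq> 0"
    using q s irred by (metis add_0 mult_0)
  have "b \<noteq> 0"
    using q b s s' irred monoid_gen_add monoid_gen_mult by (metis add_0 mult_0)
  have "L \<le> q * L" using \<open>q \<noteq> 0\<close> by simp
  also have "\<dots> \<le> H ! j" using q by simp
  finally have "L \<le> H ! j" .
  moreover have "H ! j \<le> b * H ! j" using \<open>b \<noteq> 0\<close> by simp
  ultimately have "H ! j = L"
    using b by linarith
  then show ?thesis by (simp add: L_def D_def)
qed

lemma minimal_snoc:
  assumes min: "minimal H"
    and lcm_in: "lcm (Gcd (set H)) g \<in> monoid_gen (set H)"
    and lcm_notin: "lcm (Gcd (set H)) g \<notin> set H"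
    and g: "g \<notin> monoid_gen (set H)"
  shows "minimal (H @ [g])"
  unfolding minimal_iff_irredundant
proof (intro allI impI)
  fix j assume "j < length (H @ [g])"
  then consider "j < length H" | "j = length H" by fastforce
  then show "(H @ [g]) ! j \<notin> monoid_gen (set (nths (H @ [g]) (- {j})))"
  proof cases
    case 1
    have "H ! j \<notin> monoid_gen (insert g (set (nths H (- {j}))))"
      using minimal_redundant_after_insert_eq_lcm[OF min lcm_in 1] lcm_notin nth_mem[OF 1]
      by auto
    with 1 show ?thesis
      by (simp add: nth_append set_nths_snoc_compl)
  next
    case 2
    with g show ?thesis by (simp add: nths_snoc_compl_last)
  qed
qed

lemma minimal_list_update:
  assumes min: "minimal H" and i: "i < length H"
    and Hi: "H ! i = lcm (Gcd (set H)) g"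
    and g: "g \<notin> monoid_gen (set H)"
  shows "minimal (H[i := g])"
  unfolding minimal_iff_irredundant
proof (intro allI impI notI)
  fix j assume j: "j < length (H[i := g])"
    and red: "H[i := g] ! j \<in> monoid_gen (set (nths (H[i := g]) (- {j})))"
  show False
  proof (cases "j = i")
    case True
    have "monoid_gen (set (nths H (- {i}))) \<subseteq> monoid_gen (set H)"
      by (intro monoid_gen_mono set_nths_subset)
    with red True i g show False
      by (auto simp: set_nths_list_update_compl)
  next
    case False
    have "H ! j \<in> monoid_gen (insert g (set (nths H (- {j}))))"
      using red False monoid_gen_mono[OF set_nths_list_update_compl_subset[of H i g j]]
      by auto
    moreover have "lcm (Gcd (set H)) g \<in> monoid_gen (set H)"
      using i Hi by (metis nth_mem monoid_gen_base)
    ultimately have "H ! j = H ! i"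
      using minimal_redundant_after_insert_eq_lcm[OF min] j Hi by simp
    with False i j minimal_imp_distinct[OF min] show False
      by (simp add: nth_eq_iff_index_eq)
  qed
qed

lemma telescopic_minimal_extend:
  assumes tel: "telescopic H" and min: "minimal H"
    and lcm_in: "lcm (Gcd (set H)) g \<in> monoid_gen (set H)"
  obtains K where "telescopic K" "minimal K"
    "monoid_gen (set K) = monoid_gen (insert g (set H))"
proof (cases "Gcd (set H) dvd g")
  case True
  then have "g \<in> monoid_gen (set H)"
    using lcm_in by (simp add: lcm_proj2_if_dvd)
  with tel min that show ?thesis
    by (simp add: monoid_gen_insert_absorb)
next
  case False
  define L where "L = lcm (Gcd (set H)) g"
  have g_notin: "g \<notin> monoid_gen (set H)"
    using False by (meson Gcd_dvd monoid_gen_dvd)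
  have g_pos: "0 < g"
    using False by (rule contrapos_np) simp
  show ?thesis
  proof (cases "L \<in> set H")
    case True
    then obtain i where i: "i < length H" and Hi: "H ! i = L"
      by (auto simp: in_set_conv_nth)
    define R where "R = set (nths H (- {i}))"
    have "L \<in> monoid_gen (insert g R)"
      by (rule monoid_gen_multiple[of g]) (simp_all add: L_def)
    then have "monoid_gen (insert g (set H)) = monoid_gen (insert g R)"
      using set_eq_insert_nths_compl[OF i] Hi
      by (simp add: R_def insert_commute monoid_gen_insert_absorb)
    then have "monoid_gen (set (H[i := g])) = monoid_gen (insert g (set H))"
      by (simp add: set_list_update_eq_insert_nths_compl[OF i] R_def)
    with telescopic_list_update[OF tel i _ g_pos] minimal_list_update[OF min i _ g_notin]
    show ?thesis
      using Hi that by (simp add: L_def)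
  next
    case False
    have "H \<noteq> []" and "H \<noteq> [0]"
      using tel by (auto simp: telescopic_def admissible_def)
    with tel lcm_in have "telescopic (H @ [g])"
      by (simp add: telescopic_snoc_iff)
    moreover have "minimal (H @ [g])"
      using min lcm_in False g_notin by (simp add: minimal_snoc L_def)
    ultimately show ?thesis
      using that by simp
  qed
qed

lemma telescopic_minimal_singleton: "0 < g \<Longrightarrow> telescopic [g] \<and> minimal [g]"
  by (simp add: telescopic_iff_lcm minimal_iff_irredundant admissible_def monoid_gen_empty)

lemma telescopic_imp_ex_minimal:
  "telescopic G \<Longrightarrow>
    \<exists>G'. telescopic G' \<and> minimal G' \<and> monoid_gen (set G') = monoid_gen (set G)"
proof (induction G rule: rev_induct)
  case Nil
  then show ?case by (simp add: telescopic_def admissible_def)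
next
  case (snoc g xs)
  show ?case
  proof (cases "xs = [] \<or> xs = [0]")
    \<comment> \<open>\<open>[0]\<close> is not admissible, so here the induction hypothesis is unavailable.\<close>
    case True
    with snoc.prems have "0 < g"
      by (auto simp: telescopic_def admissible_def)
    moreover have "monoid_gen (set (xs @ [g])) = monoid_gen {g}"
    proof -
      have "set (xs @ [g]) = {g} \<or> set (xs @ [g]) = insert 0 {g}"
        using True by auto
      then show ?thesis
        using monoid_gen_insert_absorb[OF monoid_gen.zero, of "{g}"] by metis
    qed
    ultimately show ?thesis
      using telescopic_minimal_singleton by (metis list.set(1,2))
  next
    case False
    with snoc.prems have tel: "telescopic xs"
      and lcm_in: "lcm (Gcd (set xs)) g \<in> monoid_gen (set xs)"
      by (simp_all add: telescopic_snoc_iff)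
    from snoc.IH[OF tel] obtain H where H: "telescopic H" "minimal H"
      and gen_H: "monoid_gen (set H) = monoid_gen (set xs)" by blast
    have "Gcd (set H) = Gcd (set xs)"
      by (metis Gcd_monoid_gen gen_H)
    with lcm_in gen_H obtain K where "telescopic K" "minimal K"
      "monoid_gen (set K) = monoid_gen (insert g (set H))"
      by (metis H telescopic_minimal_extend)
    moreover have "monoid_gen (insert g (set H)) = monoid_gen (set (xs @ [g]))"
      using gen_H by (simp add: monoid_gen_insert)
    ultimately show ?thesis by metis
  qed
qed

theorem mainTheorem1:
  fixes G :: "nat list"
  assumes "length G \<ge> 1"
    and "telescopic G"
  shows "\<exists>G' :: nat list. telescopic G' \<and> minimal G' \<and> gens G' = gens G"
  using telescopic_imp_ex_minimal[OF assms(2)] by (simp add: gens_eq_monoid_gen)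

end
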